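(* Let $k\le l$ be positive integers with $\gcd(k,l)=1$, let $n\ge1$ and $m\ge0$ be integers, and write $m=qn+r$ with integers $q\ge 0$, $0\le r<n$. Then $$U^{k,l}(m,n)\le \max\bigl(nkq,\ nkq+r(k+l)-nl\bigr).$$
   Context: $\mathcal D^{k,l}(m,n)$ denotes the set of all $nk\times nl$ matrices with nonnegative integer entries all of whose row sums equal $ml$ and all of whose column sums equal $mk$. For an $s\times t$ matrix $A=(a_{ij})$ with $s\le t$, a transversal of $A$ is a set of entries $T=\{a_{1i_1},\dots,a_{si_s}\}$ with $i_1,\dots,i_s\in\{1,\dots,t\}$ pairwise distinct, and $|T|=a_{1i_1}+\cdots+a_{si_s}$. Define ${\rm tropdet}(A)=\min_T|T|$ over all transversals $T$ of $A$, and $U^{k,l}(m,n)=\max_{A\in\mathcal D^{k,l}(m,n)}{\rm tropdet}(A)$. *)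

theory Defs
  imports Main
begin

text \<open>Matrices are functions nat => nat => nat; an s x t matrix uses the indices
  i < s, j < t and is required to vanish outside this range (so that the
  set of such matrices with given line sums is finite).\<close>

definition Dkl :: "nat \<Rightarrow> nat \<Rightarrow> nat \<Rightarrow> nat \<Rightarrow> (nat \<Rightarrow> nat \<Rightarrow> nat) set" where
  "Dkl k l m n = {A. (\<forall>i j. (i \<ge> n*k \<or> j \<ge> n*l) \<longrightarrow> A i j = 0)
      \<and> (\<forall>i < n*k. (\<Sum>j<n*l. A i j) = m*l)
      \<and> (\<forall>j < n*l. (\<Sum>i<n*k. A i j) = m*k)}"

definition transversals :: "nat \<Rightarrow> nat \<Rightarrow> (nat \<Rightarrow> nat) set" where
  "transversals s t = {\<sigma>. inj_on \<sigma> {..<s} \<and> \<sigma> ` {..<s} \<subseteq> {..<t} \<and> (\<forall>i\<ge>s. \<sigma> i = 0)}"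

definition tropdet :: "nat \<Rightarrow> nat \<Rightarrow> (nat \<Rightarrow> nat \<Rightarrow> nat) \<Rightarrow> nat" where
  "tropdet s t A = Min ((\<lambda>\<sigma>. \<Sum>i<s. A i (\<sigma> i)) ` transversals s t)"

definition U :: "nat \<Rightarrow> nat \<Rightarrow> nat \<Rightarrow> nat \<Rightarrow> nat" where
  "U k l m n = Max (tropdet (n*k) (n*l) ` Dkl k l m n)"

end

theory Submission
  imports Defs "HOL-Combinatorics.Cycles"
begin

text \<open>Pad an \<open>nk \<times> nl\<close> matrix of \<open>Dkl k l m n\<close> with zero rows to a square matrix and
  take an optimal assignment. Duality for the assignment problem, obtained from shortest-path
  potentials (an optimal permutation leaves no cycle of negative reduced cost), yields
  \<open>u\<^sub>i - x\<^sub>j \<le> a\<^sub>i\<^sub>j\<close> with \<open>\<Sum>u - \<Sum>x\<close> equal to the optimum. For \<open>L = max u - min x\<close>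
  over the genuine rows, the optimum is at most \<open>nk L\<close>, and the row of the largest \<open>u\<close>
  together with the column of the smallest \<open>x\<close> bound it by \<open>ml + mk - nl L\<close>. The case
  \<open>L \<le> q\<close> gives \<open>nkq\<close>, the case \<open>L \<ge> q + 1\<close> gives \<open>nkq + r(k+l) - nl\<close>.\<close>

fun walk_weight :: "('a \<Rightarrow> 'a \<Rightarrow> int) \<Rightarrow> 'a list \<Rightarrow> int" where
  "walk_weight f (a # b # vs) = f a b + walk_weight f (b # vs)"
| "walk_weight f _ = 0"

lemma walk_weight_append:
  "walk_weight f (xs @ y # ys) = walk_weight f (xs @ [y]) + walk_weight f (y # ys)"
proof (induction xs)
  case (Cons a xs)
  then show ?case by (cases xs) auto
qed simp

lemma walk_weight_eq_sum_list_zip: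
  "walk_weight f vs = (\<Sum>(a, b)\<leftarrow>zip vs (tl vs). f a b)"
  by (induction f vs rule: walk_weight.induct) auto

lemma cycle_weight_nonneg_if_id_optimal:
  fixes Q :: "'a \<Rightarrow> 'a \<Rightarrow> int"
  assumes opt: "\<And>\<tau>. \<tau> permutes V \<Longrightarrow> (\<Sum>c\<in>V. Q c c) \<le> (\<Sum>c\<in>V. Q c (\<tau> c))"
    and V: "finite V" and cs: "distinct cs" "set cs \<subseteq> V" "cs \<noteq> []"
  shows "0 \<le> walk_weight (\<lambda>a b. Q a b - Q a a) (cs @ [hd cs])"
proof -
  define \<tau> where "\<tau> = cycle_of_list cs"
  define g where "g c = Q c (\<tau> c) - Q c c" for c
  have rot: "map \<tau> cs = rotate1 cs"
    using cyclic_rotation[OF cs(1), of 1] by (simp add: \<tau>_def)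
  have "(\<Sum>c\<in>V. Q c (\<tau> c)) - (\<Sum>c\<in>V. Q c c) = (\<Sum>c\<in>V. g c)"
    by (simp add: g_def sum_subtractf)
  also have "\<dots> = (\<Sum>c\<in>set cs. g c)"
    using V cs(2) by (intro sum.mono_neutral_right) (auto simp: g_def \<tau>_def id_outside_supp)
  also have "\<dots> = (\<Sum>(a, b)\<leftarrow>zip cs (map \<tau> cs). Q a b - Q a a)"
    using cs(1) by (simp add: sum_list_distinct_conv_sum_set[symmetric] zip_map2
        zip_same_conv_map comp_def g_def)
  also have "zip cs (map \<tau> cs) = zip (cs @ [hd cs]) (tl (cs @ [hd cs]))"
  proof -
    have "tl (cs @ [hd cs]) = rotate1 cs" using cs(3) by (cases cs) simp_all
    then show ?thesis by (simp add: rot zip_append1)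
  qed
  finally have "(\<Sum>c\<in>V. Q c (\<tau> c)) - (\<Sum>c\<in>V. Q c c)
      = walk_weight (\<lambda>a b. Q a b - Q a a) (cs @ [hd cs])"
    by (simp add: walk_weight_eq_sum_list_zip)
  moreover have "\<tau> permutes V"
    using cycle_permutes cs(2) unfolding \<tau>_def by (rule permutes_subset)
  ultimately show ?thesis using opt by fastforce
qed

lemma closed_walk_weight_nonneg:
  assumes cycle_nonneg: "\<And>cs. distinct cs \<Longrightarrow> set cs \<subseteq> V \<Longrightarrow> cs \<noteq> [] \<Longrightarrow>
      0 \<le> walk_weight f (cs @ [hd cs])"
  shows "set (v # ys) \<subseteq> V \<Longrightarrow> 0 \<le> walk_weight f (v # ys @ [v])"
proof (induction "length ys" arbitrary: v ys rule: less_induct)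
  case less
  show ?case
  proof (cases "distinct (v # ys)")
    case True
    from cycle_nonneg[OF True less.prems] show ?thesis by simp
  next
    case not_distinct: False
    show ?thesis
    proof (cases "v \<in> set ys")
      case True
      then obtain ys1 ys2 where ys: "ys = ys1 @ v # ys2" by (meson split_list)
      have "walk_weight f (v # ys @ [v])
          = walk_weight f (v # ys1 @ [v]) + walk_weight f (v # ys2 @ [v])"
        using walk_weight_append[of f "v # ys1" v "ys2 @ [v]"] by (simp add: ys)
      moreover have "0 \<le> walk_weight f (v # ys1 @ [v])" "0 \<le> walk_weight f (v # ys2 @ [v])"
        using less.hyps[of ys1 v] less.hyps[of ys2 v] less.prems by (simp_all add: ys)
      ultimately show ?thesis by simp
    next
      case False
      with not_distinct have "\<not> distinct ys" by simp
      then obtain a y b c where ys: "ys = a @ [y] @ b @ [y] @ c"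
        using not_distinct_decomp by blast
      have "walk_weight f (v # ys @ [v])
          = walk_weight f (v # (a @ y # c) @ [v]) + walk_weight f (y # b @ [y])"
        using walk_weight_append[of f "v # a" y "b @ y # c @ [v]"]
          walk_weight_append[of f "y # b" y "c @ [v]"] walk_weight_append[of f "v # a" y "c @ [v]"]
        by (simp add: ys)
      moreover have "0 \<le> walk_weight f (v # (a @ y # c) @ [v])" "0 \<le> walk_weight f (y # b @ [y])"
        using less.hyps[of "a @ y # c" v] less.hyps[of b y] less.prems by (simp_all add: ys)
      ultimately show ?thesis by simp
    qed
  qed
qed

lemma shortcut_walk:
  assumes closed: "\<And>v ys. set (v # ys) \<subseteq> V \<Longrightarrow> 0 \<le> walk_weight f (v # ys @ [v])"
  shows "ws \<noteq> [] \<Longrightarrow> set ws \<subseteq> V \<Longrightarrow> \<exists>ps. ps \<noteq> [] \<and> hd ps = hd ws \<and> distinct ps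
      \<and> set ps \<subseteq> V \<and> walk_weight f ps \<le> walk_weight f ws"
proof (induction "length ws" arbitrary: ws rule: less_induct)
  case less
  show ?case
  proof (cases "distinct ws")
    case True
    then show ?thesis using less.prems by blast
  next
    case False
    then obtain a y b c where ws: "ws = a @ [y] @ b @ [y] @ c"
      using not_distinct_decomp by blast
    have "walk_weight f ws = walk_weight f (a @ y # c) + walk_weight f (y # b @ [y])"
      using walk_weight_append[of f a y "b @ y # c"] walk_weight_append[of f "y # b" y c]
        walk_weight_append[of f a y c] by (simp add: ws)
    moreover have "0 \<le> walk_weight f (y # b @ [y])" using closed less.prems ws by auto
    moreover have "hd (a @ y # c) = hd ws" by (cases a) (auto simp: ws)
    moreover obtain ps where "ps \<noteq> []" "hd ps = hd (a @ y # c)" "distinct ps" "set ps \<subseteq> V"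
        "walk_weight f ps \<le> walk_weight f (a @ y # c)"
      using less.hyps[of "a @ y # c"] less.prems ws by auto
    ultimately show ?thesis by (metis add_increasing2)
  qed
qed

text \<open>The potential of a vertex is the least weight of a path starting there;
  it is well defined because no cycle has negative weight.\<close>

lemma potentials_if_id_optimal:
  fixes Q :: "'a \<Rightarrow> 'a \<Rightarrow> int"
  assumes V: "finite V"
    and opt: "\<And>\<tau>. \<tau> permutes V \<Longrightarrow> (\<Sum>c\<in>V. Q c c) \<le> (\<Sum>c\<in>V. Q c (\<tau> c))"
  obtains x where "\<And>c j. c \<in> V \<Longrightarrow> j \<in> V \<Longrightarrow> x c - x j \<le> Q c j - Q c c"
proof -
  define f where "f a b = Q a b - Q a a" for a b
  have "0 \<le> walk_weight f (cs @ [hd cs])" if "distinct cs" "set cs \<subseteq> V" "cs \<noteq> []" for cs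
    using cycle_weight_nonneg_if_id_optimal[where Q=Q, OF opt V that] by (simp add: f_def[abs_def])
  then have closed: "\<And>v ys. set (v # ys) \<subseteq> V \<Longrightarrow> 0 \<le> walk_weight f (v # ys @ [v])"
    by (rule closed_walk_weight_nonneg)
  define D where "D c = {walk_weight f ps | ps. ps \<noteq> [] \<and> hd ps = c \<and> distinct ps \<and> set ps \<subseteq> V}"
    for c
  define x where "x c = Min (D c)" for c
  have fin: "finite (D c)" for c
  proof (rule finite_subset)
    have "length ps \<le> card V" if "distinct ps" "set ps \<subseteq> V" for ps
      using distinct_card[OF that(1)] card_mono[OF V that(2)] by simp
    then show "D c \<subseteq> walk_weight f ` {ps. set ps \<subseteq> V \<and> length ps \<le> card V}"
      unfolding D_def by blast
  qed (simp add: V finite_lists_length_le)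
  have lower: "x (hd ws) \<le> walk_weight f ws" if ws: "ws \<noteq> []" "set ws \<subseteq> V" for ws
  proof -
    obtain ps where "ps \<noteq> []" "hd ps = hd ws" "distinct ps" "set ps \<subseteq> V"
      and le: "walk_weight f ps \<le> walk_weight f ws"
      using shortcut_walk[OF closed ws] by blast
    then have "walk_weight f ps \<in> D (hd ws)" by (auto simp: D_def)
    then have "x (hd ws) \<le> walk_weight f ps" unfolding x_def using fin by (rule Min_le[rotated])
    with le show ?thesis by linarith
  qed
  show ?thesis
  proof
    fix c j assume c: "c \<in> V" and j: "j \<in> V"
    have "walk_weight f [j] \<in> D j"
      unfolding D_def mem_Collect_eq by (rule exI[of _ "[j]"]) (simp add: j)
    then have "x j \<in> D j" unfolding x_def using fin by (intro Min_in) auto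
    then obtain ps where ps: "x j = walk_weight f (j # ps)" "set ps \<subseteq> V"
      by (auto simp: D_def neq_Nil_conv)
    have "x c \<le> walk_weight f (c # j # ps)" using lower[of "c # j # ps"] ps c j by auto
    also have "\<dots> = f c j + x j" using ps by simp
    finally show "x c - x j \<le> Q c j - Q c c" by (simp add: f_def)
  qed
qed

lemma assignment_duality:
  fixes P :: "'a \<Rightarrow> 'a \<Rightarrow> int"
  assumes V: "finite V"
  obtains \<pi> u x where "\<pi> permutes V" "\<And>i j. i \<in> V \<Longrightarrow> j \<in> V \<Longrightarrow> u i - x j \<le> P i j"
    "(\<Sum>i\<in>V. P i (\<pi> i)) = (\<Sum>i\<in>V. u i) - (\<Sum>j\<in>V. x j)"
proof -
  define F where "F p = (\<Sum>i\<in>V. P i (p i))" for p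
  have fin: "finite {p. p permutes V}" using V by (rule finite_permutations)
  moreover have "{p. p permutes V} \<noteq> {}" using permutes_id by blast
  ultimately obtain \<pi> where "is_arg_min F (\<lambda>p. p \<in> {p. p permutes V}) \<pi>"
    using ex_is_arg_min_if_finite by blast
  then have \<pi>: "\<pi> permutes V" and min: "\<And>p. p permutes V \<Longrightarrow> F \<pi> \<le> F p"
    by (simp_all add: is_arg_min_linorder)
  define Q where "Q c j = P (inv \<pi> c) j" for c j
  have sum_Q: "(\<Sum>c\<in>V. Q c (\<tau> c)) = F (\<tau> \<circ> \<pi>)" for \<tau>
    using sum.permute[OF \<pi>, of "\<lambda>c. Q c (\<tau> c)"] by (simp add: F_def Q_def permutes_inverses[OF \<pi>])
  have "(\<Sum>c\<in>V. Q c c) \<le> (\<Sum>c\<in>V. Q c (\<tau> c))" if "\<tau> permutes V" for \<tau>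
    using sum_Q[of id] sum_Q[of \<tau>] min[OF permutes_compose[OF \<pi> that]] by simp
  then obtain x where x: "\<And>c j. c \<in> V \<Longrightarrow> j \<in> V \<Longrightarrow> x c - x j \<le> Q c j - Q c c"
    using potentials_if_id_optimal[OF V] by blast
  define u where "u i = P i (\<pi> i) + x (\<pi> i)" for i
  show thesis
  proof
    show "\<pi> permutes V" by (fact \<pi>)
    show "u i - x j \<le> P i j" if "i \<in> V" "j \<in> V" for i j
      using x[of "\<pi> i" j] that permutes_in_image[OF \<pi>]
      by (simp add: u_def Q_def permutes_inverses[OF \<pi>])
    have "(\<Sum>i\<in>V. x (\<pi> i)) = (\<Sum>j\<in>V. x j)"
      using sum.permute[OF \<pi>, of x] by simp
    then show "(\<Sum>i\<in>V. P i (\<pi> i)) = (\<Sum>i\<in>V. u i) - (\<Sum>j\<in>V. x j)"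
      by (simp add: u_def sum.distrib)
  qed
qed

lemma dual_value_bound:
  fixes A :: "nat \<Rightarrow> nat \<Rightarrow> nat" and u x :: "nat \<Rightarrow> int"
  assumes "N \<le> M" "0 < N"
    and feasible: "\<And>i j. i < M \<Longrightarrow> j < M \<Longrightarrow> u i - x j \<le> (if i < N then int (A i j) else 0)"
    and rows: "\<And>i. i < N \<Longrightarrow> (\<Sum>j<M. A i j) = R"
    and cols: "\<And>j. j < M \<Longrightarrow> (\<Sum>i<N. A i j) = C"
  obtains L :: int where "(\<Sum>i<M. u i) - (\<Sum>j<M. x j) \<le> int N * L"
    "(\<Sum>i<M. u i) - (\<Sum>j<M. x j) \<le> int R + int C - int M * L"
proof -
  define umax where "umax = Max (u ` {..<N})"
  define xmin where "xmin = Min (x ` {..<M})"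
  have "umax \<in> u ` {..<N}" unfolding umax_def using \<open>0 < N\<close> by (intro Max_in) auto
  then obtain i0 where i0: "i0 < N" "u i0 = umax" by auto
  have "xmin \<in> x ` {..<M}" unfolding xmin_def using assms(1,2) by (intro Min_in) (auto simp: lessThan_empty_iff)
  then obtain j0 where j0: "j0 < M" "x j0 = xmin" by auto
  have u_le: "u i \<le> umax" if "i < N" for i using that by (simp add: umax_def)
  have x_ge: "xmin \<le> x j" if "j < M" for j using that by (simp add: xmin_def)
  define T where "T = (\<Sum>i<N. u i - xmin)"
  \<comment> \<open>on the zero dummy rows feasibility forces \<open>u i \<le> xmin\<close>\<close>
  have "(\<Sum>i<M. u i) = (\<Sum>i<N. u i) + (\<Sum>i\<in>{N..<M}. u i)"
    using sum.atLeastLessThan_concat[of 0 N M u] \<open>N \<le> M\<close> by (simp add: atLeast0LessThan)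
  moreover have "(\<Sum>i\<in>{N..<M}. u i) \<le> int (M - N) * xmin"
    using sum_bounded_above[of "{N..<M}" u xmin] feasible[OF _ j0(1)] j0(2) by force
  moreover have "int M * xmin \<le> (\<Sum>j<M. x j)"
    using sum_bounded_below[of "{..<M}" xmin x] x_ge by simp
  ultimately have W_le: "(\<Sum>i<M. u i) - (\<Sum>j<M. x j) \<le> T + (int M * xmin - (\<Sum>j<M. x j))"
    and slack: "int M * xmin - (\<Sum>j<M. x j) \<le> 0"
    using \<open>N \<le> M\<close> by (simp_all add: T_def sum_subtractf of_nat_diff left_diff_distrib)
  have "T \<le> int N * (umax - xmin)"
    using sum_bounded_above[of "{..<N}" "\<lambda>i. u i - xmin" "umax - xmin"] u_le by (simp add: T_def)
  moreover have "T \<le> int C"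
  proof -
    have "u i - xmin \<le> int (A i j0)" if "i < N" for i
      using feasible[of i j0] that j0 \<open>N \<le> M\<close> by simp
    then have "T \<le> (\<Sum>i<N. int (A i j0))" unfolding T_def by (intro sum_mono) simp
    then show ?thesis using cols[OF j0(1)] by (simp flip: of_nat_sum)
  qed
  moreover have "int M * umax - (\<Sum>j<M. x j) \<le> int R"
  proof -
    have "u i0 - x j \<le> int (A i0 j)" if "j < M" for j
      using feasible[of i0 j] that i0 \<open>N \<le> M\<close> by simp
    then have "(\<Sum>j<M. u i0 - x j) \<le> (\<Sum>j<M. int (A i0 j))" by (intro sum_mono) simp
    then show ?thesis using rows[OF i0(1)] i0(2) by (simp add: sum_subtractf flip: of_nat_sum)
  qed
  moreover have "int M * (umax - xmin) = int M * umax - int M * xmin"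
    by (simp add: right_diff_distrib)
  ultimately show thesis using W_le slack by (intro that[of "umax - xmin"]) linarith+
qed

lemma transversal_with_linear_bounds:
  fixes A :: "nat \<Rightarrow> nat \<Rightarrow> nat"
  assumes "N \<le> M" "0 < N"
    and rows: "\<And>i. i < N \<Longrightarrow> (\<Sum>j<M. A i j) = R"
    and cols: "\<And>j. j < M \<Longrightarrow> (\<Sum>i<N. A i j) = C"
  obtains \<sigma> L where "\<sigma> \<in> transversals N M"
    "int (\<Sum>i<N. A i (\<sigma> i)) \<le> int N * L"
    "int (\<Sum>i<N. A i (\<sigma> i)) \<le> int R + int C - int M * L"
proof -
  define P where "P i j = (if i < N then int (A i j) else 0)" for i j
  obtain \<pi> u x where \<pi>: "\<pi> permutes {..<M}"
    and feasible: "\<And>i j. i < M \<Longrightarrow> j < M \<Longrightarrow> u i - x j \<le> P i j"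
    and dual_value: "(\<Sum>i<M. P i (\<pi> i)) = (\<Sum>i<M. u i) - (\<Sum>j<M. x j)"
    using assignment_duality[of "{..<M}" P] by auto
  define \<sigma> where "\<sigma> i = (if i < N then \<pi> i else 0)" for i
  have "\<sigma> \<in> transversals N M"
    using permutes_inj[OF \<pi>] permutes_in_image[OF \<pi>] \<open>N \<le> M\<close>
    by (auto simp: transversals_def \<sigma>_def inj_on_def inj_def)
  moreover have "(\<Sum>i<M. P i (\<pi> i)) = int (\<Sum>i<N. A i (\<sigma> i))"
  proof -
    have "(\<Sum>i<M. P i (\<pi> i)) = (\<Sum>i<N. P i (\<pi> i))"
      using \<open>N \<le> M\<close> by (intro sum.mono_neutral_right) (auto simp: P_def)
    then show ?thesis by (simp add: P_def \<sigma>_def)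
  qed
  moreover obtain L where "(\<Sum>i<M. u i) - (\<Sum>j<M. x j) \<le> int N * L"
    "(\<Sum>i<M. u i) - (\<Sum>j<M. x j) \<le> int R + int C - int M * L"
    using dual_value_bound[OF assms(1,2) _ rows cols] feasible unfolding P_def by blast
  ultimately show thesis using dual_value that by metis
qed

lemma tropdet_le_transversal_weight:
  assumes "\<sigma> \<in> transversals s t"
  shows "tropdet s t A \<le> (\<Sum>i<s. A i (\<sigma> i))"
proof -
  have "(\<Sum>i<s. A i (\<tau> i)) \<le> (\<Sum>i<s. \<Sum>j<t. A i j)" if "\<tau> \<in> transversals s t" for \<tau>
    using that by (intro sum_mono member_le_sum) (auto simp: transversals_def)
  then have "finite ((\<lambda>\<tau>. \<Sum>i<s. A i (\<tau> i)) ` transversals s t)"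
    by (auto simp: finite_nat_set_iff_bounded_le)
  then show ?thesis unfolding tropdet_def using assms by (intro Min_le) auto
qed

lemma le_max_of_linear_bounds:
  fixes W L :: int and n k l m q r :: nat
  assumes W1: "W \<le> int (n*k) * L" and W2: "W \<le> int (m*l) + int (m*k) - int (n*l) * L"
    and m: "m = q*n + r"
  shows "W \<le> max (int (n*k*q)) (int (n*k*q) + int r * int (k+l) - int (n*l))"
proof (cases "L \<le> int q")
  case True
  then have "int (n*k) * L \<le> int (n*k) * int q" by (intro mult_left_mono) simp_all
  then show ?thesis using W1 by (simp add: ac_simps)
next
  case False
  then have "int (n*l) * (int q + 1) \<le> int (n*l) * L" by (intro mult_left_mono) simp_all
  moreover have "int (m*l) + int (m*k) - int (n*l) * (int q + 1)
      = int (n*k*q) + int r * int (k+l) - int (n*l)"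
    by (simp add: m algebra_simps)
  ultimately show ?thesis using W2 by linarith
qed

lemma tropdet_le_max_of_bounds:
  fixes k l m n q r :: nat
  assumes "0 < k" "k \<le> l" "0 < n" "m = q*n + r" "A \<in> Dkl k l m n"
  shows "int (tropdet (n*k) (n*l) A)
    \<le> max (int (n*k*q)) (int (n*k*q) + int r * int (k+l) - int (n*l))"
proof -
  have "n*k \<le> n*l" "0 < n*k" using assms by simp_all
  moreover have "\<And>i. i < n*k \<Longrightarrow> (\<Sum>j<n*l. A i j) = m*l"
    "\<And>j. j < n*l \<Longrightarrow> (\<Sum>i<n*k. A i j) = m*k"
    using \<open>A \<in> Dkl k l m n\<close> by (simp_all add: Dkl_def)
  ultimately obtain \<sigma> L where "\<sigma> \<in> transversals (n*k) (n*l)"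
    and bounds: "int (\<Sum>i<n*k. A i (\<sigma> i)) \<le> int (n*k) * L"
      "int (\<Sum>i<n*k. A i (\<sigma> i)) \<le> int (m*l) + int (m*k) - int (n*l) * L"
    by (rule transversal_with_linear_bounds)
  then have "int (tropdet (n*k) (n*l) A) \<le> int (\<Sum>i<n*k. A i (\<sigma> i))"
    by (simp only: of_nat_le_iff tropdet_le_transversal_weight)
  also have "\<dots> \<le> max (int (n*k*q)) (int (n*k*q) + int r * int (k+l) - int (n*l))"
    using bounds \<open>m = q*n + r\<close> by (rule le_max_of_linear_bounds)
  finally show ?thesis .
qed

lemma card_div_eq_block:
  assumes "0 < l" "c < n"
  shows "card {j \<in> {..<n*l}. j div l = c} = l"
proof -
  have "j div l = c \<longleftrightarrow> c*l \<le> j \<and> j < c*l + l" for j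
    using less_eq_div_iff_mult_less_eq[OF \<open>0 < l\<close>, of c j]
      div_less_iff_less_mult[OF \<open>0 < l\<close>, of j "Suc c"] by (auto simp: add.commute)
  moreover have "c*l + l \<le> n*l" using mult_le_mono1[of "Suc c" n l] assms by simp
  ultimately have "{j \<in> {..<n*l}. j div l = c} = {c*l..<c*l + l}"
    by (simp only: set_eq_iff mem_Collect_eq lessThan_iff atLeastLessThan_iff) linarith
  then show ?thesis by simp
qed

lemma block_matrix_mem_Dkl:
  assumes "0 < k" "0 < l"
  shows "(\<lambda>i j. if i < n*k \<and> j < n*l \<and> i div k = j div l then m else 0) \<in> Dkl k l m n"
proof -
  have block_sum: "(\<Sum>j<n*l. if j div l = c then m else 0) = m*l" if "0 < l" "c < n" for l c
    using card_div_eq_block[OF that] by (simp add: sum.inter_filter[symmetric])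
  have "i div k < n" if "i < n*k" for i using that by (simp add: less_mult_imp_div_less mult.commute)
  moreover have "j div l < n" if "j < n*l" for j using that by (simp add: less_mult_imp_div_less mult.commute)
  ultimately show ?thesis
    using block_sum[OF \<open>0 < l\<close>] block_sum[OF \<open>0 < k\<close>] unfolding Dkl_def
    by (auto simp: eq_commute[of "_ div l"] cong: if_cong)
qed

theorem theorem5p2:
  fixes k l m n q r :: nat
  assumes "0 < k" "k \<le> l" "gcd k l = 1" "1 \<le> n"
    and "m = q*n + r" "r < n"
  shows "int (U k l m n) \<le> max (int (n*k*q)) (int (n*k*q) + int r * int (k+l) - int (n*l))"
proof -
  let ?B = "max (int (n*k*q)) (int (n*k*q) + int r * int (k+l) - int (n*l))"
  define T where "T = tropdet (n*k) (n*l) ` Dkl k l m n"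
  have bound: "int t \<le> ?B" if "t \<in> T" for t
    using that assms tropdet_le_max_of_bounds[of k l n m q r] by (auto simp: T_def)
  then have "finite T"
    by (metis finite_nat_set_iff_bounded_le nat_int nat_mono)
  moreover have "T \<noteq> {}" using block_matrix_mem_Dkl[of k l n m] assms by (auto simp: T_def)
  ultimately have "U k l m n \<in> T" unfolding U_def T_def[symmetric] by (rule Max_in)
  then show ?thesis by (rule bound)
qed

end
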